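(* For $(f,g),(f',g')\in\Theta$ both in general position, $$d_{\mathrm{rep}}((f,g),(f',g'))=0\iff d_{\mathrm{logit}}(p_{f,g},p_{f',g'})=0.$$
   Context: Model class $\Theta$: pairs $(f,g)$, $f:\mathcal X\to\mathbb R^m$, $g:\mathcal Y\to\mathbb R^m$, $\mathcal Y$ a finite set of $k$ labels, $\sum_y g(y)=0$, inducing $p_{f,g}(y\mid x)\propto\exp(f(x)^\top g(y))$; $p_x$ is the data distribution. Logits $u(x)=(f(x)^\top g(y))_{y\in\mathcal Y}$, $d_{\mathrm{logit}}^2=\mathbb E_{x\sim p_x}\|u(x)-u'(x)\|_2^2$. For a pivot $\tilde y\in\mathcal Y$ set $\tilde g(y)=g(y)-g(\tilde y)$, and for $\mathcal J=\{y_1,\dots,y_m\}\subseteq\mathcal Y\setminus\{\tilde y\}$ let $\tilde L_{\mathcal J}=(\tilde g(y_1)\ \cdots\ \tilde g(y_m))\in\mathbb R^{m\times m}$ (similarly $\tilde L'_{\mathcal J}$ from $g'$). A model is in general position if $\tilde L_{\mathcal J}$ is invertible for every pivot $\tilde y$ and every $m$-subset $\mathcal J\subseteq\mathcal Y\setminus\{\tilde y\}$, and $\mathrm{span}\{f(x):x\in\mathrm{supp}(p_x)\}=\mathbb R^m$. Put $\tilde A_{\mathcal J}=\tilde L_{\mathcal J}^{-\top}\tilde L_{\mathcal J}'^{\top}$ and $J=\binom{k-1}{m}$. The linear identifiability dissimilarity is $$d_{\mathrm{rep}}^2((f,g),(f',g'))=\frac{1}{kJ}\sum_{\tilde y\in\mathcal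 Y}\ \sum_{\mathcal J\subseteq\mathcal Y\setminus\{\tilde y\},\,|\mathcal J|=m}\mathbb E_{x\sim p_x}\|f(x)-\tilde A_{\mathcal J}f'(x)\|_2^2.$$ *)

theory Defs
  imports "HOL-Probability.Probability"
begin

text \<open>Features f : X -> R^m are functions 'x => real^'m (m = CARD('m)),
  label embeddings g : Y -> R^m with Y a finite type of k = CARD('y) labels.\<close>

definition in_Theta :: "('y::finite \<Rightarrow> real^'m) \<Rightarrow> bool" where
  "in_Theta g \<longleftrightarrow> (\<Sum>y\<in>UNIV. g y) = 0"

definition logits :: "('x \<Rightarrow> real^'m) \<Rightarrow> ('y::finite \<Rightarrow> real^'m) \<Rightarrow> 'x \<Rightarrow> real^'y" where
  "logits f g x = (\<chi> y. f x \<bullet> g y)"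

definition d_logit_sq :: "'x measure \<Rightarrow> ('x \<Rightarrow> real^'m) \<Rightarrow> ('y::finite \<Rightarrow> real^'m)
    \<Rightarrow> ('x \<Rightarrow> real^'m) \<Rightarrow> ('y \<Rightarrow> real^'m) \<Rightarrow> ennreal" where
  "d_logit_sq px f g f' g' =
     (\<integral>\<^sup>+ x. ennreal ((norm (logits f g x - logits f' g' x))\<^sup>2) \<partial>px)"

definition pivoted :: "('y \<Rightarrow> real^'m) \<Rightarrow> 'y \<Rightarrow> 'y \<Rightarrow> real^'m" where
  "pivoted g yt y = g y - g yt"

text \<open>A fixed enumeration (y_1,...,y_m) of an m-subset J (the choice of order is irrelevant).\<close>
definition enum_subset :: "'y set \<Rightarrow> 'm::finite \<Rightarrow> 'y" where
  "enum_subset J = (SOME e. bij_betw e (UNIV::'m set) J)"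

definition Lmat :: "('y \<Rightarrow> real^'m::finite) \<Rightarrow> 'y \<Rightarrow> 'y set \<Rightarrow> real^'m^'m" where
  "Lmat g yt J = (\<chi> i j. pivoted g yt (enum_subset J j) $ i)"

definition Amat :: "('y \<Rightarrow> real^'m::finite) \<Rightarrow> ('y \<Rightarrow> real^'m) \<Rightarrow> 'y \<Rightarrow> 'y set \<Rightarrow> real^'m^'m" where
  "Amat g g' yt J = matrix_inv (transpose (Lmat g yt J)) ** transpose (Lmat g' yt J)"

definition msubsets :: "'m::finite itself \<Rightarrow> 'y \<Rightarrow> 'y set set" where
  "msubsets _ yt = {J. J \<subseteq> UNIV - {yt} \<and> card J = CARD('m)}"

definition measure_support :: "'x::topological_space measure \<Rightarrow> 'x set" where
  "measure_support px = {x. \<forall>U. open U \<and> x \<in> U \<longrightarrow> emeasure px U > 0}"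

definition general_position ::
    "'x::topological_space measure \<Rightarrow> ('x \<Rightarrow> real^'m::finite) \<Rightarrow> ('y::finite \<Rightarrow> real^'m) \<Rightarrow> bool" where
  "general_position px f g \<longleftrightarrow>
     (\<forall>yt. \<forall>J \<in> msubsets TYPE('m) yt. invertible (Lmat g yt J :: real^'m^'m)) \<and>
     span (f ` measure_support px) = UNIV"

definition d_rep_sq :: "'x measure \<Rightarrow> ('x \<Rightarrow> real^'m::finite) \<Rightarrow> ('y::finite \<Rightarrow> real^'m)
    \<Rightarrow> ('x \<Rightarrow> real^'m) \<Rightarrow> ('y \<Rightarrow> real^'m) \<Rightarrow> ennreal" where
  "d_rep_sq px f g f' g' =
     ennreal (1 / (real CARD('y) * real (CARD('y) - 1 choose CARD('m)))) *
     (\<Sum>yt\<in>UNIV. \<Sum>J\<in>msubsets TYPE('m) yt.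
        \<integral>\<^sup>+ x. ennreal ((norm (f x - Amat g g' yt J *v f' x))\<^sup>2) \<partial>px)"

end

theory Submission
  imports Defs
begin

text \<open>Since \<open>L\<^sub>J\<close> is invertible, \<open>f(x) = A\<^sub>J f'(x)\<close> says exactly that
  \<open>f(x)\<^sup>T (g(y) - g(y\<^sub>0)) = f'(x)\<^sup>T (g'(y) - g'(y\<^sub>0))\<close> for all \<open>y \<in> J\<close>, where \<open>y\<^sub>0\<close> is the pivot.
  Every label other than the pivot lies in some \<open>m\<close>-subset, so the identities for all pivots and
  subsets state that the two logit vectors differ by a constant; the constraint \<open>\<Sum>\<^sub>y g(y) = 0\<close>
  centres both logit vectors, which forces that constant to vanish.  Both dissimilarities are
  integrals of nonnegative functions, hence vanish iff these pointwise identities hold almost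
  surely, and the finitely many pivots and subsets can be moved inside the almost-sure
  quantifier.\<close>

lemma matrix_inv_mult:
  fixes M :: "'a::semiring_1^'n^'m"
  assumes "invertible M"
  shows "M ** matrix_inv M = mat 1" and "matrix_inv M ** M = mat 1"
  using someI_ex[OF assms[unfolded invertible_def]] unfolding matrix_inv_def by auto

lemma eq_matrix_inv_mult_iff:
  fixes M :: "'a::semiring_1^'n^'m" and N :: "'a^'k^'m"
  assumes "invertible M"
  shows "v = (matrix_inv M ** N) *v w \<longleftrightarrow> M *v v = N *v w"
proof
  assume "v = (matrix_inv M ** N) *v w"
  then have "M *v v = (M ** matrix_inv M ** N) *v w"
    by (simp add: matrix_vector_mul_assoc matrix_mul_assoc)
  then show "M *v v = N *v w"
    by (simp add: matrix_inv_mult[OF assms])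
next
  assume "M *v v = N *v w"
  then have "matrix_inv M *v (M *v v) = (matrix_inv M ** N) *v w"
    by (simp add: matrix_vector_mul_assoc)
  then show "v = (matrix_inv M ** N) *v w"
    by (simp add: matrix_vector_mul_assoc matrix_inv_mult[OF assms])
qed

lemma range_enum_subset:
  assumes "finite J" and "card J = CARD('m::finite)"
  shows "range (enum_subset J :: 'm \<Rightarrow> 'y) = J"
proof -
  have "\<exists>e. bij_betw e (UNIV :: 'm set) J"
    using finite_same_card_bij[of "UNIV :: 'm set" J] assms by simp
  then have "bij_betw (enum_subset J :: 'm \<Rightarrow> 'y) UNIV J"
    unfolding enum_subset_def by (rule someI_ex)
  then show ?thesis
    by (simp add: bij_betw_def)
qed

lemma transpose_Lmat_mult_nth:
  "(transpose (Lmat g yt J) *v v) $ j = v \<bullet> pivoted g yt (enum_subset J j)"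
  unfolding matrix_vector_mult_def transpose_def Lmat_def inner_vec_def
  by (simp add: mult.commute)

lemma Amat_mult_eq_iff:
  fixes a b :: "real^'m::finite" and g g' :: "'y::finite \<Rightarrow> real^'m"
  assumes "invertible (Lmat g yt J)" and "J \<in> msubsets TYPE('m) yt"
  shows "a = Amat g g' yt J *v b \<longleftrightarrow> (\<forall>y\<in>J. a \<bullet> (g y - g yt) = b \<bullet> (g' y - g' yt))"
proof -
  have "a = Amat g g' yt J *v b \<longleftrightarrow>
        transpose (Lmat g yt J) *v a = transpose (Lmat g' yt J) *v b"
    unfolding Amat_def by (rule eq_matrix_inv_mult_iff[OF transpose_invertible[OF assms(1)]])
  also have "\<dots> \<longleftrightarrow> (\<forall>y\<in>range (enum_subset J :: 'm \<Rightarrow> 'y).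
                          a \<bullet> (g y - g yt) = b \<bullet> (g' y - g' yt))"
    unfolding vec_eq_iff transpose_Lmat_mult_nth pivoted_def by blast
  also have "range (enum_subset J :: 'm \<Rightarrow> 'y) = J"
    using assms(2) by (intro range_enum_subset) (simp_all add: msubsets_def)
  finally show ?thesis .
qed

lemma ex_msubset_containing:
  fixes y yt :: "'y::finite"
  assumes "CARD('m::finite) \<le> CARD('y) - 1" and "y \<noteq> yt"
  shows "\<exists>J\<in>msubsets TYPE('m) yt. y \<in> J"
proof -
  have "CARD('m) - 1 \<le> card (UNIV - {yt, y})"
    using assms by (simp add: card_Diff_subset)
  then obtain S where S: "S \<subseteq> UNIV - {yt, y}" "card S = CARD('m) - 1"
    using ex_card by blast
  moreover have "y \<notin> S" and "0 < CARD('m)"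
    using S(1) by auto
  ultimately have "card (insert y S) = CARD('m)"
    by simp
  moreover have "insert y S \<subseteq> UNIV - {yt}"
    using S assms(2) by auto
  ultimately have "insert y S \<in> msubsets TYPE('m) yt"
    by (simp add: msubsets_def)
  then show ?thesis
    by blast
qed

lemma eq_if_differences_eq_and_sum_eq_0:
  fixes u v :: "'a::finite \<Rightarrow> 'b::field_char_0"
  assumes "sum u UNIV = 0" and "sum v UNIV = 0"
    and "\<And>y y'. u y - u y' = v y - v y'"
  shows "u = v"
proof
  fix y
  have "of_nat CARD('a) * u y = (\<Sum>y'\<in>UNIV. u y - u y')"
    using assms(1) by (simp add: sum_subtractf)
  also have "\<dots> = (\<Sum>y'\<in>UNIV. v y - v y')"
    using assms(3) by simp
  also have "\<dots> = of_nat CARD('a) * v y"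
    using assms(2) by (simp add: sum_subtractf)
  finally show "u y = v y"
    by simp
qed

lemma all_Amat_mult_eq_iff_inner_eq:
  fixes a b :: "real^'m::finite" and g g' :: "'y::finite \<Rightarrow> real^'m"
  assumes inv: "\<And>yt J. J \<in> msubsets TYPE('m) yt \<Longrightarrow> invertible (Lmat g yt J)"
    and card: "CARD('m) \<le> CARD('y) - 1"
    and "in_Theta g" and "in_Theta g'"
  shows "(\<forall>yt. \<forall>J\<in>msubsets TYPE('m) yt. a = Amat g g' yt J *v b) \<longleftrightarrow>
         (\<forall>y. a \<bullet> g y = b \<bullet> g' y)"
proof
  assume A: "\<forall>yt. \<forall>J\<in>msubsets TYPE('m) yt. a = Amat g g' yt J *v b"
  have "a \<bullet> g y - a \<bullet> g yt = b \<bullet> g' y - b \<bullet> g' yt" for y yt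
  proof (cases "y = yt")
    case False
    then obtain J where "J \<in> msubsets TYPE('m) yt" and "y \<in> J"
      using ex_msubset_containing[OF card] by blast
    then show ?thesis
      using A Amat_mult_eq_iff[OF inv] by (fastforce simp: inner_diff_right)
  qed simp
  moreover have "(\<Sum>y\<in>UNIV. a \<bullet> g y) = 0" and "(\<Sum>y\<in>UNIV. b \<bullet> g' y) = 0"
    using \<open>in_Theta g\<close> \<open>in_Theta g'\<close> by (simp_all add: in_Theta_def flip: inner_sum_right)
  ultimately have "(\<lambda>y. a \<bullet> g y) = (\<lambda>y. b \<bullet> g' y)"
    by (intro eq_if_differences_eq_and_sum_eq_0)
  then show "\<forall>y. a \<bullet> g y = b \<bullet> g' y"
    by meson
next
  assume "\<forall>y. a \<bullet> g y = b \<bullet> g' y"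
  then show "\<forall>yt. \<forall>J\<in>msubsets TYPE('m) yt. a = Amat g g' yt J *v b"
    using Amat_mult_eq_iff[OF inv] by (simp add: inner_diff_right)
qed

lemma d_rep_sq_eq_0_iff:
  fixes g g' :: "'y::finite \<Rightarrow> real^'m::finite"
  assumes "CARD('m) \<le> CARD('y) - 1"
    and f: "f \<in> borel_measurable px" and f': "f' \<in> borel_measurable px"
  shows "d_rep_sq px f g f' g' = 0 \<longleftrightarrow>
         (AE x in px. \<forall>yt. \<forall>J\<in>msubsets TYPE('m) yt. f x = Amat g g' yt J *v f' x)"
proof -
  \<comment> \<open>Without the cardinality bound the binomial is 0 and, since \<open>1 / 0 = 0\<close>, so is \<open>d_rep_sq\<close>.\<close>
  have "0 < real (CARD('y) - 1 choose CARD('m))"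
    using assms(1) by simp
  then have "0 < 1 / (real CARD('y) * real (CARD('y) - 1 choose CARD('m)))"
    by simp
  then have normalisation: "ennreal (1 / (real CARD('y) * real (CARD('y) - 1 choose CARD('m)))) \<noteq> 0"
    by (simp only: ennreal_eq_0_iff not_le)
  have "(\<lambda>x. Amat g g' yt J *v f' x) \<in> borel_measurable px" for yt J
    using borel_measurable_continuous_on[OF matrix_vector_mult_linear_continuous_on f'] .
  then have "(\<lambda>x. ennreal ((norm (f x - Amat g g' yt J *v f' x))\<^sup>2)) \<in> borel_measurable px" for yt J
    using f by measurable
  then have "d_rep_sq px f g f' g' = 0 \<longleftrightarrow>
      (\<forall>yt. \<forall>J\<in>msubsets TYPE('m) yt. AE x in px. f x = Amat g g' yt J *v f' x)"
    unfolding d_rep_sq_def using normalisation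
    by (simp add: sum_eq_0_iff nn_integral_0_iff_AE ennreal_eq_0_iff)
  also have "\<dots> \<longleftrightarrow> (AE x in px. \<forall>yt. \<forall>J\<in>msubsets TYPE('m) yt. f x = Amat g g' yt J *v f' x)"
    by (simp add: AE_all_countable AE_finite_all)
  finally show ?thesis .
qed

lemma d_logit_sq_eq_0_iff:
  assumes "f \<in> borel_measurable px" and "f' \<in> borel_measurable px"
  shows "d_logit_sq px f g f' g' = 0 \<longleftrightarrow> (AE x in px. logits f g x = logits f' g' x)"
proof -
  have "(\<lambda>x. logits f g x) \<in> borel_measurable px" if "f \<in> borel_measurable px" for f g
    unfolding logits_def
    by (rule borel_measurable_continuous_on[OF _ that]) (intro continuous_intros)
  then have "(\<lambda>x. ennreal ((norm (logits f g x - logits f' g' x))\<^sup>2)) \<in> borel_measurable px"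
    using assms by measurable
  then show ?thesis
    unfolding d_logit_sq_def by (simp add: nn_integral_0_iff_AE ennreal_eq_0_iff)
qed

theorem mainTheorem6:
  fixes px :: "'x::topological_space measure"
    and f f' :: "'x \<Rightarrow> real^'m::finite"
    and g g' :: "'y::finite \<Rightarrow> real^'m"
  assumes "prob_space px"
    and "sets px = sets borel"
    and "f \<in> borel_measurable px" and "f' \<in> borel_measurable px"
    and "CARD('m) \<le> CARD('y) - 1"
    and "in_Theta g" and "in_Theta g'"
    and "general_position px f g" and "general_position px f' g'"
  shows "d_rep_sq px f g f' g' = 0 \<longleftrightarrow> d_logit_sq px f g f' g' = 0"
proof -
  have inv: "\<And>yt J. J \<in> msubsets TYPE('m) yt \<Longrightarrow> invertible (Lmat g yt J)"
    using \<open>general_position px f g\<close> unfolding general_position_def by blast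
  have "d_rep_sq px f g f' g' = 0 \<longleftrightarrow>
        (AE x in px. \<forall>yt. \<forall>J\<in>msubsets TYPE('m) yt. f x = Amat g g' yt J *v f' x)"
    using assms(5,3,4) by (rule d_rep_sq_eq_0_iff)
  also have "\<dots> \<longleftrightarrow> (AE x in px. logits f g x = logits f' g' x)"
    using all_Amat_mult_eq_iff_inner_eq[OF inv assms(5-7)]
    by (simp add: logits_def vec_eq_iff)
  also have "\<dots> \<longleftrightarrow> d_logit_sq px f g f' g' = 0"
    using assms(3,4) by (rule d_logit_sq_eq_0_iff[symmetric])
  finally show ?thesis .
qed

end
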